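(* Let $\mathcal{D}=\{(X_i,B_i):i\in I\}$ be a collection of pairs, each consisting of a random variable $X_i$ on $\Omega$ and a nonempty event $B_i\subseteq\Omega$, equipped with coherent$_1$ conditional previsions $\{P(X_i\mid B_i):i\in I\}$, and suppose $\mathcal{D}$ contains every pair $(c,\Omega)$ with $c$ a real number (the constant random variable $c$). Let $\mathcal{F}$ be any set of random variable/nonempty event pairs with $\mathcal{D}\subseteq\mathcal{F}$. Then there exists an assignment of extended-real conditional previsions $P'(X\mid B)$ for all $(X,B)\in\mathcal{F}$ that agrees with $P$ on $\mathcal{D}$ and is coherent$_1$.
   Context: Let $\Omega$ be a nonempty set of states $\omega$; events are subsets of $\Omega$ and random variables are real-valued functions on $\Omega$. An event $B$ is identified with its indicator function. A conditional prevision $P(X\mid B)$ is an extended real number; $P(X\mid\Omega)$ is called a marginal prevision. Coherence$_1$: a collection $\{P(X_i\mid B_i):i\in I\}$ is coherent$_1$ if for every finite $\{i_1,\dots,i_n\}\subseteq I$, all real $\alpha_1,\dots,\alpha_n$ with $\alpha_j\ge 0$ whenever $P(X_{i_j}\mid B_{i_j})=+\infty$ and $\alpha_j\le 0$ whenever $P(X_{i_j}\mid B_{i_j})=-\infty$, and all real $c_1,\dots,c_n$ with $c_j=P(X_{i_j}\mid B_{i_j})$ whenever that prevision is finite, we have $\sup_\omega \sum_{j=1}^n \alpha_j B_{i_j}(\omega)[X_{i_j}(\omega)-c_j]\ge 0$. *)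

theory Defs
  imports "HOL-Analysis.Analysis"
begin

text \<open>States are elements of the type 'w (Omega = UNIV, automatically nonempty).\<close>

definition coherent1 ::
  "(('w \<Rightarrow> real) \<times> 'w set) set \<Rightarrow> (('w \<Rightarrow> real) \<times> 'w set \<Rightarrow> ereal) \<Rightarrow> bool" where
  "coherent1 D P \<longleftrightarrow>
     (\<forall>S \<alpha> c. finite S \<and> S \<subseteq> D
        \<and> (\<forall>p\<in>S. P p = \<infinity> \<longrightarrow> \<alpha> p \<ge> (0::real))
        \<and> (\<forall>p\<in>S. P p = -\<infinity> \<longrightarrow> \<alpha> p \<le> 0)
        \<and> (\<forall>p\<in>S. P p \<noteq> \<infinity> \<and> P p \<noteq> -\<infinity> \<longrightarrow> ereal (c p) = P p)
      \<longrightarrow> (SUP \<omega>. ereal (\<Sum>p\<in>S. \<alpha> p * indicator (snd p) \<omega> * (fst p \<omega> - c p))) \<ge> 0)"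

end

theory Submission
  imports Defs
begin

text \<open>Coherence is of finite character, so by Zorn's lemma it suffices to extend a coherent
assignment to one new pair \<open>q = (X, B)\<close>. The gains of the old assignment form a convex cone
without uniformly negative members. Call a real \<open>v\<close> an acceptable buying (selling) price if no
positive (negative) multiple of \<open>B (X - v)\<close> added to a member of the cone is uniformly negative.
A buying and a selling bet at the same price cancel, so every real is acceptable for buying or
for selling; both sets are closed, so by connectedness of the real line they either meet, giving a
finite value for \<open>P(X | B)\<close>, or one of them is the whole line, giving \<open>+\<infinity>\<close> or \<open>-\<infinity>\<close>.\<close>

definition uniformly_negative :: "('w \<Rightarrow> real) \<Rightarrow> bool" where
  "uniformly_negative f \<longleftrightarrow> (\<exists>e>0. \<forall>\<omega>. f \<omega> \<le> - e)"

lemma SUP_ereal_nonneg_iff: "0 \<le> (SUP \<omega>. ereal (f \<omega>)) \<longleftrightarrow> \<not> uniformly_negative f"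
proof
  assume nonneg: "0 \<le> (SUP \<omega>. ereal (f \<omega>))"
  show "\<not> uniformly_negative f"
  proof
    assume "uniformly_negative f"
    then obtain e where "e > 0" "\<forall>\<omega>. f \<omega> \<le> - e"
      unfolding uniformly_negative_def by blast
    then have "(SUP \<omega>. ereal (f \<omega>)) \<le> ereal (- e)"
      by (intro SUP_least) auto
    then have "0 \<le> ereal (- e)"
      using nonneg by (rule order_trans[rotated])
    with \<open>e > 0\<close> show False
      by simp
  qed
next
  assume not_neg: "\<not> uniformly_negative f"
  show "0 \<le> (SUP \<omega>. ereal (f \<omega>))"
  proof (rule ccontr)
    assume "\<not> 0 \<le> (SUP \<omega>. ereal (f \<omega>))"
    moreover have upper: "ereal (f \<omega>) \<le> (SUP \<omega>. ereal (f \<omega>))" for \<omega>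
      by (rule SUP_upper) auto
    moreover have "(SUP \<omega>. ereal (f \<omega>)) \<noteq> -\<infinity>"
      using upper[of undefined] by auto
    ultimately obtain r where r: "(SUP \<omega>. ereal (f \<omega>)) = ereal r" "r < 0"
      by (cases "SUP \<omega>. ereal (f \<omega>)") auto
    then have "\<forall>\<omega>. f \<omega> \<le> - (- r)"
      using upper by auto
    with r not_neg show False
      unfolding uniformly_negative_def by (metis neg_0_less_iff_less)
  qed
qed

definition admissible_stake :: "ereal \<Rightarrow> real \<Rightarrow> real \<Rightarrow> bool" where
  "admissible_stake v a c \<longleftrightarrow>
     (v = \<infinity> \<longrightarrow> a \<ge> 0) \<and> (v = -\<infinity> \<longrightarrow> a \<le> 0) \<and> (v \<noteq> \<infinity> \<and> v \<noteq> -\<infinity> \<longrightarrow> ereal c = v)"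

definition admissible ::
  "(('w \<Rightarrow> real) \<times> 'w set) set \<Rightarrow> (('w \<Rightarrow> real) \<times> 'w set \<Rightarrow> ereal)
    \<Rightarrow> (('w \<Rightarrow> real) \<times> 'w set) set \<Rightarrow> (('w \<Rightarrow> real) \<times> 'w set \<Rightarrow> real)
    \<Rightarrow> (('w \<Rightarrow> real) \<times> 'w set \<Rightarrow> real) \<Rightarrow> bool" where
  "admissible E Q S \<alpha> c \<longleftrightarrow>
     finite S \<and> S \<subseteq> E \<and> (\<forall>p\<in>S. admissible_stake (Q p) (\<alpha> p) (c p))"

definition gain ::
  "(('w \<Rightarrow> real) \<times> 'w set) set \<Rightarrow> (('w \<Rightarrow> real) \<times> 'w set \<Rightarrow> real)
    \<Rightarrow> (('w \<Rightarrow> real) \<times> 'w set \<Rightarrow> real) \<Rightarrow> 'w \<Rightarrow> real" where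
  "gain S \<alpha> c \<omega> = (\<Sum>p\<in>S. \<alpha> p * indicator (snd p) \<omega> * (fst p \<omega> - c p))"

lemma coherent1_iff:
  "coherent1 E Q \<longleftrightarrow> (\<forall>S \<alpha> c. admissible E Q S \<alpha> c \<longrightarrow> \<not> uniformly_negative (gain S \<alpha> c))"
  unfolding coherent1_def admissible_def admissible_stake_def ball_conj_distrib gain_def[abs_def]
    SUP_ereal_nonneg_iff ..

lemma admissible_cong:
  "(\<And>p. p \<in> E \<Longrightarrow> Q p = Q' p) \<Longrightarrow> admissible E Q S \<alpha> c \<longleftrightarrow> admissible E Q' S \<alpha> c"
  unfolding admissible_def by (force simp: subset_iff)

lemma coherent1_cong: "coherent1 E Q \<Longrightarrow> (\<And>p. p \<in> E \<Longrightarrow> Q p = Q' p) \<Longrightarrow> coherent1 E Q'"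
  unfolding coherent1_iff using admissible_cong[of E Q Q'] by blast

lemma admissible_mono: "admissible E' Q S \<alpha> c \<Longrightarrow> E' \<subseteq> E \<Longrightarrow> admissible E Q S \<alpha> c"
  unfolding admissible_def by auto

lemma coherent1_subset:
  assumes "coherent1 E Q" and "E' \<subseteq> E"
  shows "coherent1 E' Q"
  unfolding coherent1_iff
proof (intro allI impI)
  fix S \<alpha> c
  assume "admissible E' Q S \<alpha> c"
  then have "admissible E Q S \<alpha> c"
    using assms(2) by (rule admissible_mono)
  with assms(1) show "\<not> uniformly_negative (gain S \<alpha> c)"
    unfolding coherent1_iff by blast
qed

lemma coherent1_finite_character:
  assumes "\<And>S. finite S \<Longrightarrow> S \<subseteq> E \<Longrightarrow> coherent1 S Q"
  shows "coherent1 E Q"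
  unfolding coherent1_iff
proof (intro allI impI)
  fix S \<alpha> c
  assume adm: "admissible E Q S \<alpha> c"
  then have "coherent1 S Q" and "admissible S Q S \<alpha> c"
    using assms unfolding admissible_def by auto
  then show "\<not> uniformly_negative (gain S \<alpha> c)"
    unfolding coherent1_iff by blast
qed

lemma admissible_stake_add:
  assumes "admissible_stake v a1 c1" and "admissible_stake v a2 c2"
  obtains c where "admissible_stake v (a1 + a2) c"
    and "\<And>x. (a1 + a2) * (x - c) = a1 * (x - c1) + a2 * (x - c2)"
proof (cases "v = \<infinity> \<or> v = -\<infinity>")
  case True
  with assms have same_sign: "(a1 \<ge> 0 \<and> a2 \<ge> 0) \<or> (a1 \<le> 0 \<and> a2 \<le> 0)"
    unfolding admissible_stake_def by auto
  define c where "c = (a1 * c1 + a2 * c2) / (a1 + a2)"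
  have "admissible_stake v (a1 + a2) c"
    using assms True unfolding admissible_stake_def by auto
  moreover have "(a1 + a2) * (x - c) = a1 * (x - c1) + a2 * (x - c2)" for x
  proof (cases "a1 + a2 = 0")
    case True
    with same_sign have "a1 = 0" "a2 = 0" by auto
    then show ?thesis by simp
  next
    case False
    then show ?thesis unfolding c_def by (simp add: field_simps)
  qed
  ultimately show thesis by (rule that)
next
  case False
  with assms have "c1 = real_of_ereal v" "c2 = real_of_ereal v"
    unfolding admissible_stake_def by auto
  with assms show thesis
    by (intro that[of "real_of_ereal v"]) (auto simp: admissible_stake_def algebra_simps)
qed

definition gains ::
  "(('w \<Rightarrow> real) \<times> 'w set) set \<Rightarrow> (('w \<Rightarrow> real) \<times> 'w set \<Rightarrow> ereal) \<Rightarrow> ('w \<Rightarrow> real) set" where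
  "gains E Q = {gain S \<alpha> c | S \<alpha> c. admissible E Q S \<alpha> c}"

lemma not_uniformly_negative_gains:
  "coherent1 E Q \<Longrightarrow> g \<in> gains E Q \<Longrightarrow> \<not> uniformly_negative g"
  unfolding coherent1_iff gains_def by blast

lemma gain_mono_neutral:
  assumes "finite S" "S' \<subseteq> S" "\<And>p. p \<in> S - S' \<Longrightarrow> \<alpha> p = 0"
  shows "gain S \<alpha> c = gain S' \<alpha> c"
  unfolding gain_def using assms by (intro ext sum.mono_neutral_right) auto

lemma gains_add:
  assumes "g1 \<in> gains E Q" and "g2 \<in> gains E Q"
  shows "(\<lambda>\<omega>. g1 \<omega> + g2 \<omega>) \<in> gains E Q"
proof -
  obtain S1 \<alpha>1 c1 S2 \<alpha>2 c2 where adm: "admissible E Q S1 \<alpha>1 c1" "admissible E Q S2 \<alpha>2 c2"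
    and g: "g1 = gain S1 \<alpha>1 c1" "g2 = gain S2 \<alpha>2 c2"
    using assms unfolding gains_def by blast
  define S where "S = S1 \<union> S2"
  define \<alpha>1' where "\<alpha>1' p = (if p \<in> S1 then \<alpha>1 p else 0)" for p
  define \<alpha>2' where "\<alpha>2' p = (if p \<in> S2 then \<alpha>2 p else 0)" for p
  \<comment> \<open>a zero stake must still carry the price of a finite prevision, so borrow it from the other gamble\<close>
  define c1' where "c1' p = (if p \<in> S1 then c1 p else c2 p)" for p
  define c2' where "c2' p = (if p \<in> S2 then c2 p else c1 p)" for p
  have S: "finite S" "S \<subseteq> E"
    using adm unfolding S_def admissible_def by auto
  have "gain S \<alpha>1' c1' = gain S1 \<alpha>1' c1'" "gain S \<alpha>2' c2' = gain S2 \<alpha>2' c2'"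
    using S by (auto intro!: gain_mono_neutral simp: S_def \<alpha>1'_def \<alpha>2'_def)
  then have g': "g1 = gain S \<alpha>1' c1'" "g2 = gain S \<alpha>2' c2'"
    unfolding g gain_def by (auto simp: \<alpha>1'_def \<alpha>2'_def c1'_def c2'_def)
  have "\<forall>p\<in>S. admissible_stake (Q p) (\<alpha>1' p) (c1' p) \<and> admissible_stake (Q p) (\<alpha>2' p) (c2' p)"
    using adm unfolding admissible_def S_def \<alpha>1'_def \<alpha>2'_def c1'_def c2'_def
    by (auto simp: admissible_stake_def)
  then have "\<forall>p\<in>S. \<exists>c. admissible_stake (Q p) (\<alpha>1' p + \<alpha>2' p) c
      \<and> (\<forall>x. (\<alpha>1' p + \<alpha>2' p) * (x - c) = \<alpha>1' p * (x - c1' p) + \<alpha>2' p * (x - c2' p))"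
    by (metis admissible_stake_add)
  then obtain c where c: "\<forall>p\<in>S. admissible_stake (Q p) (\<alpha>1' p + \<alpha>2' p) (c p)
      \<and> (\<forall>x. (\<alpha>1' p + \<alpha>2' p) * (x - c p) = \<alpha>1' p * (x - c1' p) + \<alpha>2' p * (x - c2' p))"
    by metis
  have "admissible E Q S (\<lambda>p. \<alpha>1' p + \<alpha>2' p) c"
    using S c unfolding admissible_def by blast
  moreover have "gain S (\<lambda>p. \<alpha>1' p + \<alpha>2' p) c \<omega> = g1 \<omega> + g2 \<omega>" for \<omega>
    unfolding g' gain_def sum.distrib[symmetric]
  proof (intro sum.cong refl)
    fix p
    assume "p \<in> S"
    then have "(\<alpha>1' p + \<alpha>2' p) * (fst p \<omega> - c p)
        = \<alpha>1' p * (fst p \<omega> - c1' p) + \<alpha>2' p * (fst p \<omega> - c2' p)"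
      using c by blast
    then have "indicator (snd p) \<omega> * ((\<alpha>1' p + \<alpha>2' p) * (fst p \<omega> - c p))
        = indicator (snd p) \<omega> * (\<alpha>1' p * (fst p \<omega> - c1' p) + \<alpha>2' p * (fst p \<omega> - c2' p))"
      by (simp only:)
    then show "(\<alpha>1' p + \<alpha>2' p) * indicator (snd p) \<omega> * (fst p \<omega> - c p)
        = \<alpha>1' p * indicator (snd p) \<omega> * (fst p \<omega> - c1' p)
          + \<alpha>2' p * indicator (snd p) \<omega> * (fst p \<omega> - c2' p)"
      by (simp add: algebra_simps)
  qed
  ultimately show ?thesis
    unfolding gains_def by (blast intro: ext sym)
qed

lemma gains_scale:
  assumes "g \<in> gains E Q" and "t > 0"
  shows "(\<lambda>\<omega>. t * g \<omega>) \<in> gains E Q"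
proof -
  obtain S \<alpha> c where "admissible E Q S \<alpha> c" "g = gain S \<alpha> c"
    using assms unfolding gains_def by blast
  moreover have "admissible E Q S (\<lambda>p. t * \<alpha> p) c"
    using \<open>admissible E Q S \<alpha> c\<close> \<open>t > 0\<close>
    unfolding admissible_def admissible_stake_def by (auto simp: mult_nonneg_nonpos)
  moreover have "gain S (\<lambda>p. t * \<alpha> p) c = (\<lambda>\<omega>. t * gain S \<alpha> c \<omega>)"
    unfolding gain_def by (simp add: sum_distrib_left algebra_simps)
  ultimately show ?thesis
    unfolding gains_def by (blast intro: sym)
qed

lemma open_uniformly_negative_affine:
  fixes g h :: "'w \<Rightarrow> real"
  assumes "\<And>\<omega>. \<bar>h \<omega>\<bar> \<le> K"
  shows "open {v. uniformly_negative (\<lambda>\<omega>. g \<omega> + v * h \<omega>)}"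
  unfolding open_dist
proof (intro ballI)
  fix x assume "x \<in> {v. uniformly_negative (\<lambda>\<omega>. g \<omega> + v * h \<omega>)}"
  then obtain e where e: "e > 0" "\<And>\<omega>. g \<omega> + x * h \<omega> \<le> - e"
    unfolding uniformly_negative_def by auto
  define M where "M = \<bar>K\<bar> + 1"
  define r where "r = e / (2 * M)"
  have "M > 0" unfolding M_def by simp
  have "r > 0" using e \<open>M > 0\<close> unfolding r_def by simp
  moreover have "uniformly_negative (\<lambda>\<omega>. g \<omega> + y * h \<omega>)" if "dist y x < r" for y
    unfolding uniformly_negative_def
  proof (intro exI[of _ "e / 2"] conjI allI)
    fix \<omega>
    have "(y - x) * h \<omega> \<le> \<bar>y - x\<bar> * \<bar>h \<omega>\<bar>"
      by (metis abs_ge_self abs_mult)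
    also have "\<dots> \<le> \<bar>y - x\<bar> * M"
      using assms[of \<omega>] unfolding M_def by (intro mult_left_mono) auto
    also have "\<dots> \<le> r * M"
      using that \<open>M > 0\<close> by (intro mult_right_mono) (auto simp: dist_real_def)
    also have "\<dots> = e / 2"
      using \<open>M > 0\<close> unfolding r_def by simp
    finally show "g \<omega> + y * h \<omega> \<le> - (e / 2)"
      using e(2)[of \<omega>] by (simp add: algebra_simps)
  qed (use e in simp)
  ultimately show "\<exists>r>0. \<forall>y. dist y x < r \<longrightarrow> y \<in> {v. uniformly_negative (\<lambda>\<omega>. g \<omega> + v * h \<omega>)}"
    by blast
qed

text \<open>With \<open>B = {0<..}\<close> these are the prices at which buying \<open>q\<close> is acceptable, with
\<open>B = {..<0}\<close> those at which selling it is.\<close>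

definition acceptable_prices ::
  "(('w \<Rightarrow> real) \<times> 'w set) set \<Rightarrow> (('w \<Rightarrow> real) \<times> 'w set \<Rightarrow> ereal)
    \<Rightarrow> ('w \<Rightarrow> real) \<times> 'w set \<Rightarrow> real set \<Rightarrow> real set" where
  "acceptable_prices E Q q B = {v. \<forall>g\<in>gains E Q. \<forall>\<beta>\<in>B.
     \<not> uniformly_negative (\<lambda>\<omega>. g \<omega> + \<beta> * indicator (snd q) \<omega> * (fst q \<omega> - v))}"

lemma closed_acceptable_prices: "closed (acceptable_prices E Q q B)"
proof -
  define I where "I \<omega> = (indicator (snd q) \<omega> :: real)" for \<omega>
  have affine: "(\<lambda>\<omega>. g \<omega> + \<beta> * I \<omega> * (fst q \<omega> - v))
      = (\<lambda>\<omega>. (g \<omega> + \<beta> * I \<omega> * fst q \<omega>) + v * (- \<beta> * I \<omega>))" for g \<beta> v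
    by (rule ext) (simp add: algebra_simps)
  have eq: "acceptable_prices E Q q B = - (\<Union>g\<in>gains E Q. \<Union>\<beta>\<in>B.
      {v. uniformly_negative (\<lambda>\<omega>. (g \<omega> + \<beta> * I \<omega> * fst q \<omega>) + v * (- \<beta> * I \<omega>))})"
    unfolding acceptable_prices_def I_def[symmetric] affine by blast
  have open_bets: "open {v. uniformly_negative (\<lambda>\<omega>. (g \<omega> + \<beta> * I \<omega> * fst q \<omega>) + v * (- \<beta> * I \<omega>))}"
    for g \<beta>
    by (rule open_uniformly_negative_affine[where K = "\<bar>\<beta>\<bar>"]) (simp add: I_def abs_mult indicator_def)
  show ?thesis
    unfolding eq by (intro closed_Compl open_UN ballI open_bets)
qed

lemma acceptable_prices_buy_sell_cover:
  assumes "coherent1 E Q"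
  shows "acceptable_prices E Q q {0<..} \<union> acceptable_prices E Q q {..<0} = UNIV"
proof -
  have "v \<in> acceptable_prices E Q q {0<..} \<or> v \<in> acceptable_prices E Q q {..<0}" for v
  proof (rule ccontr)
    define k where "k \<omega> = indicator (snd q) \<omega> * (fst q \<omega> - v)" for \<omega>
    assume "\<not> ?thesis"
    then obtain g1 b1 e1 g2 b2 e2
      where g1: "g1 \<in> gains E Q" "b1 > 0" "e1 > 0" "\<And>\<omega>. g1 \<omega> + b1 * k \<omega> \<le> - e1"
        and g2: "g2 \<in> gains E Q" "b2 < 0" "e2 > 0" "\<And>\<omega>. g2 \<omega> + b2 * k \<omega> \<le> - e2"
      unfolding acceptable_prices_def uniformly_negative_def k_def by (auto simp: mult.assoc)
    \<comment> \<open>weighting the buying and the selling bet by \<open>-b2\<close> and \<open>b1\<close> cancels the bets on \<open>q\<close>\<close>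
    define g where "g \<omega> = (- b2) * g1 \<omega> + b1 * g2 \<omega>" for \<omega>
    have "g \<in> gains E Q"
      unfolding g_def using g1 g2 by (intro gains_add gains_scale) auto
    moreover have "uniformly_negative g"
      unfolding uniformly_negative_def
    proof (intro exI[of _ "(- b2) * e1 + b1 * e2"] conjI allI)
      show "0 < (- b2) * e1 + b1 * e2"
        using g1 g2 by (intro add_pos_pos mult_pos_pos) auto
      fix \<omega>
      have "(- b2) * (g1 \<omega> + b1 * k \<omega>) \<le> (- b2) * (- e1)"
        using g1 g2 by (intro mult_left_mono) auto
      moreover have "b1 * (g2 \<omega> + b2 * k \<omega>) \<le> b1 * (- e2)"
        using g1 g2 by (intro mult_left_mono) auto
      moreover have "(- b2) * (g1 \<omega> + b1 * k \<omega>) + b1 * (g2 \<omega> + b2 * k \<omega>) = g \<omega>"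
        unfolding g_def by (simp add: algebra_simps)
      ultimately show "g \<omega> \<le> - ((- b2) * e1 + b1 * e2)"
        by (simp add: algebra_simps)
    qed
    ultimately show False
      using assms not_uniformly_negative_gains by blast
  qed
  then show ?thesis by blast
qed

definition acceptable_value ::
  "(('w \<Rightarrow> real) \<times> 'w set) set \<Rightarrow> (('w \<Rightarrow> real) \<times> 'w set \<Rightarrow> ereal)
    \<Rightarrow> ('w \<Rightarrow> real) \<times> 'w set \<Rightarrow> ereal \<Rightarrow> bool" where
  "acceptable_value E Q q v \<longleftrightarrow> (case v of
     ereal r \<Rightarrow> r \<in> acceptable_prices E Q q {0<..} \<inter> acceptable_prices E Q q {..<0}
   | PInfty \<Rightarrow> acceptable_prices E Q q {0<..} = UNIV
   | MInfty \<Rightarrow> acceptable_prices E Q q {..<0} = UNIV)"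

lemma ex_acceptable_value:
  assumes "coherent1 E Q"
  obtains v where "acceptable_value E Q q v"
proof (cases "acceptable_prices E Q q {0<..} \<inter> acceptable_prices E Q q {..<0} = {}")
  case True
  have "acceptable_prices E Q q {0<..} \<inter> UNIV = {} \<or> acceptable_prices E Q q {..<0} \<inter> UNIV = {}"
    by (rule connected_closedD[OF connected_UNIV _ _ closed_acceptable_prices closed_acceptable_prices])
      (use True acceptable_prices_buy_sell_cover[OF assms, of q] in auto)
  then have "acceptable_value E Q q (-\<infinity>) \<or> acceptable_value E Q q \<infinity>"
    using acceptable_prices_buy_sell_cover[OF assms, of q] unfolding acceptable_value_def by auto
  then show thesis using that by blast
next
  case False
  then obtain r where "r \<in> acceptable_prices E Q q {0<..} \<inter> acceptable_prices E Q q {..<0}"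
    by blast
  then show thesis
    by (intro that[of "ereal r"]) (simp add: acceptable_value_def)
qed

lemma acceptable_value_stake:
  assumes "coherent1 E Q" and "acceptable_value E Q q v" and "admissible_stake v a c"
    and "g \<in> gains E Q"
  shows "\<not> uniformly_negative (\<lambda>\<omega>. g \<omega> + a * indicator (snd q) \<omega> * (fst q \<omega> - c))"
proof -
  consider "a = 0" | "a > 0" "c \<in> acceptable_prices E Q q {0<..}"
    | "a < 0" "c \<in> acceptable_prices E Q q {..<0}"
    using assms(2,3) unfolding acceptable_value_def admissible_stake_def
    by (cases v; cases a "0::real" rule: linorder_cases) auto
  then show ?thesis
  proof cases
    case 1
    then show ?thesis using assms(1,4) not_uniformly_negative_gains by simp
  qed (use assms(4) in \<open>auto simp: acceptable_prices_def\<close>)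
qed

lemma coherent1_insert:
  assumes coh: "coherent1 E Q" and "q \<notin> E" and "acceptable_value E Q q v"
  shows "coherent1 (insert q E) (Q(q := v))"
  unfolding coherent1_iff
proof (intro allI impI)
  fix S \<alpha> c
  assume adm: "admissible (insert q E) (Q(q := v)) S \<alpha> c"
  then have fin: "finite S" and sub: "S \<subseteq> insert q E"
    and stakes: "\<forall>p\<in>S. admissible_stake ((Q(q := v)) p) (\<alpha> p) (c p)"
    unfolding admissible_def by blast+
  have "\<forall>p\<in>S - {q}. admissible_stake (Q p) (\<alpha> p) (c p)"
    using stakes by (metis DiffE fun_upd_other singletonI)
  then have adm_rest: "admissible E Q (S - {q}) \<alpha> c"
    using fin sub unfolding admissible_def by blast
  show "\<not> uniformly_negative (gain S \<alpha> c)"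
  proof (cases "q \<in> S")
    case True
    from fin have "gain S \<alpha> c
        = (\<lambda>\<omega>. gain (S - {q}) \<alpha> c \<omega> + \<alpha> q * indicator (snd q) \<omega> * (fst q \<omega> - c q))"
      by (simp add: gain_def sum.remove[OF _ True] fun_eq_iff)
    moreover have "admissible_stake v (\<alpha> q) (c q)"
      using stakes True by (metis fun_upd_same)
    moreover have "gain (S - {q}) \<alpha> c \<in> gains E Q"
      using adm_rest unfolding gains_def by blast
    ultimately show ?thesis
      using acceptable_value_stake[OF coh assms(3)] by simp
  next
    case False
    then show ?thesis
      using adm_rest coh unfolding coherent1_iff by simp
  qed
qed

definition graph_value :: "('a \<times> 'b) set \<Rightarrow> 'a \<Rightarrow> 'b" where
  "graph_value R p = (THE v. (p, v) \<in> R)"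

lemma graph_value_eq: "single_valued R \<Longrightarrow> (p, v) \<in> R \<Longrightarrow> graph_value R p = v"
  unfolding graph_value_def by (blast intro: the_equality dest: single_valuedD)

lemma single_valued_Union_chain:
  assumes "chain\<^sub>\<subseteq> C" and "\<And>R. R \<in> C \<Longrightarrow> single_valued R"
  shows "single_valued (\<Union>C)"
proof (rule single_valuedI)
  fix x y z
  assume "(x, y) \<in> \<Union>C" and "(x, z) \<in> \<Union>C"
  then obtain R1 R2 where "R1 \<in> C" "R2 \<in> C" "(x, y) \<in> R1" "(x, z) \<in> R2"
    by blast
  moreover from \<open>R1 \<in> C\<close> \<open>R2 \<in> C\<close> assms(1) have "R1 \<subseteq> R2 \<or> R2 \<subseteq> R1"
    unfolding chain_subset_def by blast
  ultimately show "y = z"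
    using assms(2) by (metis single_valuedD subsetD)
qed

lemma coherent1_Union_chain:
  assumes "chain\<^sub>\<subseteq> C" and "C \<noteq> {}"
    and "\<And>R. R \<in> C \<Longrightarrow> single_valued R \<and> coherent1 (Domain R) (graph_value R)"
  shows "coherent1 (Domain (\<Union>C)) (graph_value (\<Union>C))"
proof (rule coherent1_finite_character)
  fix S
  assume "finite S" and S: "S \<subseteq> Domain (\<Union>C)"
  have sv: "single_valued (\<Union>C)"
    using assms by (intro single_valued_Union_chain) auto
  define G where "G = (\<lambda>p. (p, graph_value (\<Union>C) p)) ` S"
  have "G \<subseteq> \<Union>C"
  proof
    fix x
    assume "x \<in> G"
    then obtain p where "p \<in> S" and x: "x = (p, graph_value (\<Union>C) p)"
      unfolding G_def by blast
    have "p \<in> Domain (\<Union>C)"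
      using S \<open>p \<in> S\<close> by (rule subsetD)
    then obtain v where "(p, v) \<in> \<Union>C"
      by (rule DomainE)
    with x show "x \<in> \<Union>C"
      using graph_value_eq[OF sv] by simp
  qed
  then obtain R where R: "R \<in> C" "G \<subseteq> R"
    using finite_subset_Union_chain[of G C UNIV] \<open>finite S\<close> assms(1,2)
    unfolding G_def chain_subset_alt_def by blast
  then have "S \<subseteq> Domain R"
    unfolding G_def by auto
  then have "coherent1 S (graph_value R)"
    using assms(3)[OF \<open>R \<in> C\<close>] coherent1_subset by blast
  moreover have "graph_value R p = graph_value (\<Union>C) p" if "p \<in> S" for p
  proof -
    have "(p, graph_value (\<Union>C) p) \<in> R"
      using R(2) that unfolding G_def by blast
    moreover have "single_valued R"
      using assms(3)[OF \<open>R \<in> C\<close>] by blast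
    ultimately show ?thesis
      by (simp add: graph_value_eq)
  qed
  ultimately show "coherent1 S (graph_value (\<Union>C))"
    by (rule coherent1_cong)
qed

lemma coherent1_graph_insert:
  assumes "single_valued R" and "coherent1 (Domain R) (graph_value R)" and "q \<notin> Domain R"
  obtains v where "single_valued (insert (q, v) R)"
    and "coherent1 (Domain (insert (q, v) R)) (graph_value (insert (q, v) R))"
proof -
  obtain v where "acceptable_value (Domain R) (graph_value R) q v"
    using ex_acceptable_value[OF assms(2)] .
  then have coh: "coherent1 (insert q (Domain R)) ((graph_value R)(q := v))"
    using assms(2,3) by (rule coherent1_insert[rotated 2])
  have sv: "single_valued (insert (q, v) R)"
    using assms(1,3) unfolding single_valued_def by auto
  have agree: "((graph_value R)(q := v)) p = graph_value (insert (q, v) R) p"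
    if "p \<in> insert q (Domain R)" for p
  proof (cases "p = q")
    case True
    then show ?thesis
      using graph_value_eq[OF sv, of q v] by simp
  next
    case False
    with that obtain w where "(p, w) \<in> R"
      by blast
    with False show ?thesis
      using graph_value_eq[OF sv, of p w] graph_value_eq[OF assms(1), of p w] by simp
  qed
  have "coherent1 (Domain (insert (q, v) R)) (graph_value (insert (q, v) R))"
    unfolding Domain_insert using coh agree by (rule coherent1_cong)
  with sv show thesis by (rule that)
qed

definition coherent_graph_extensions ::
  "(('w \<Rightarrow> real) \<times> 'w set) set \<Rightarrow> (('w \<Rightarrow> real) \<times> 'w set \<Rightarrow> ereal)
    \<Rightarrow> (('w \<Rightarrow> real) \<times> 'w set) set \<Rightarrow> ((('w \<Rightarrow> real) \<times> 'w set) \<times> ereal) set set" where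
  "coherent_graph_extensions D P F = {R. single_valued R \<and> Domain R \<subseteq> F
     \<and> (\<lambda>p. (p, P p)) ` D \<subseteq> R \<and> coherent1 (Domain R) (graph_value R)}"

lemma graph_in_coherent_graph_extensions:
  assumes "coherent1 D P" and "D \<subseteq> F"
  shows "(\<lambda>p. (p, P p)) ` D \<in> coherent_graph_extensions D P F"
proof -
  define R0 where "R0 = (\<lambda>p. (p, P p)) ` D"
  have sv0: "single_valued R0"
    unfolding R0_def single_valued_def by auto
  have "P p = graph_value R0 p" if "p \<in> D" for p
    using graph_value_eq[OF sv0, of p "P p"] that unfolding R0_def by auto
  with assms(1) have "coherent1 D (graph_value R0)"
    by (rule coherent1_cong)
  moreover have "Domain R0 = D"
    unfolding R0_def by force
  ultimately show ?thesis
    using sv0 assms(2) unfolding coherent_graph_extensions_def R0_def by auto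
qed

lemma Union_chain_in_coherent_graph_extensions:
  assumes "C \<in> chains (coherent_graph_extensions D P F)" and "C \<noteq> {}"
  shows "\<Union>C \<in> coherent_graph_extensions D P F"
proof -
  from assms(1) have ch: "chain\<^sub>\<subseteq> C" and CA: "C \<subseteq> coherent_graph_extensions D P F"
    unfolding chains_def by auto
  have "single_valued (\<Union>C)"
    by (rule single_valued_Union_chain[OF ch])
      (use CA in \<open>unfold coherent_graph_extensions_def, blast\<close>)
  moreover have "coherent1 (Domain (\<Union>C)) (graph_value (\<Union>C))"
    by (rule coherent1_Union_chain[OF ch assms(2)])
      (use CA in \<open>unfold coherent_graph_extensions_def, blast\<close>)
  moreover have "Domain (\<Union>C) \<subseteq> F" and "(\<lambda>p. (p, P p)) ` D \<subseteq> \<Union>C"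
    using CA assms(2) unfolding coherent_graph_extensions_def by blast+
  ultimately show ?thesis
    unfolding coherent_graph_extensions_def by blast
qed

lemma coherent1_extension:
  assumes "coherent1 D P" and "D \<subseteq> F"
  shows "\<exists>P'. (\<forall>p\<in>D. P' p = P p) \<and> coherent1 F P'"
proof -
  let ?A = "coherent_graph_extensions D P F"
  have "\<forall>C\<in>chains ?A. \<exists>U\<in>?A. \<forall>R\<in>C. R \<subseteq> U"
    using graph_in_coherent_graph_extensions[OF assms] Union_chain_in_coherent_graph_extensions
    by (metis Sup_upper empty_iff)
  then obtain M where "M \<in> ?A" and max: "\<forall>R\<in>?A. M \<subseteq> R \<longrightarrow> R = M"
    by (rule Zorn_Lemma2[THEN bexE])
  then have M: "single_valued M" "Domain M \<subseteq> F" "(\<lambda>p. (p, P p)) ` D \<subseteq> M"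
    "coherent1 (Domain M) (graph_value M)"
    unfolding coherent_graph_extensions_def by auto
  have "Domain M = F"
  proof (rule ccontr)
    assume "Domain M \<noteq> F"
    with M(2) obtain q where "q \<in> F" "q \<notin> Domain M" by blast
    obtain v where "single_valued (insert (q, v) M)"
      and "coherent1 (Domain (insert (q, v) M)) (graph_value (insert (q, v) M))"
      using coherent1_graph_insert[OF M(1,4) \<open>q \<notin> Domain M\<close>] .
    with M(2,3) \<open>q \<in> F\<close> have "insert (q, v) M \<in> ?A"
      unfolding coherent_graph_extensions_def by auto
    with max have "insert (q, v) M = M" by blast
    with \<open>q \<notin> Domain M\<close> show False by blast
  qed
  show ?thesis
  proof (intro exI[of _ "graph_value M"] conjI ballI)
    fix p
    assume "p \<in> D"
    with M(3) have "(p, P p) \<in> M"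
      by blast
    then show "graph_value M p = P p"
      by (rule graph_value_eq[OF M(1)])
  next
    show "coherent1 F (graph_value M)"
      using M(4) \<open>Domain M = F\<close> by simp
  qed
qed

theorem theorem7p1:
  fixes D F :: "(('w \<Rightarrow> real) \<times> 'w set) set"
    and P :: "('w \<Rightarrow> real) \<times> 'w set \<Rightarrow> ereal"
  assumes "\<forall>p\<in>D. snd p \<noteq> {}"
    and "coherent1 D P"
    and "\<forall>c::real. ((\<lambda>_. c), UNIV) \<in> D"
    and "D \<subseteq> F"
    and "\<forall>p\<in>F. snd p \<noteq> {}"
  shows "\<exists>P'. (\<forall>p\<in>D. P' p = P p) \<and> coherent1 F P'"
  using assms(2,4) by (rule coherent1_extension)

end
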